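(* Let $(n_k)_{k\ge1}$ be a strictly increasing sequence of positive integers. There exists an infinite set $\mathcal{K}\subset\mathbb{N}$ such that the set $$L\Big(\{m\in\mathbb{N}: m\ge2\}\setminus\bigcup_{k\in\mathcal{K}}\{m\in\mathbb{N}: n_k\le m<n_{k+1}\}\Big)$$ is lineable.
   Context: $\ell^\infty$ is the space of bounded real sequences with the sup norm. For $x\in\ell^\infty$, $L_x$ denotes the set of accumulation points (subsequential limits) of $x$. For a set $A$ of cardinalities, $L(A)=\{x\in\ell^\infty: |L_x|\in A\}$. A subset $Y$ of a vector space is lineable if $Y\cup\{0\}$ contains an infinite-dimensional linear subspace. *)

theory Defs
  imports "HOL-Analysis.Analysis" "HOL-Library.Function_Algebras"
begin

text \<open>Real sequences are functions nat => real; addition and zero are pointwise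
  (Function_Algebras); scalar multiplication is pointwise.\<close>

definition lscale :: "real \<Rightarrow> (nat \<Rightarrow> real) \<Rightarrow> (nat \<Rightarrow> real)" where
  "lscale c x = (\<lambda>i. c * x i)"

definition linfty :: "(nat \<Rightarrow> real) set" where
  "linfty = {x. bounded (range x)}"

definition accpts :: "(nat \<Rightarrow> real) \<Rightarrow> real set" where
  "accpts x = {a. \<exists>r. strict_mono r \<and> (x \<circ> r) \<longlonglongrightarrow> a}"

definition Lset :: "nat set \<Rightarrow> (nat \<Rightarrow> real) set" where
  "Lset A = {x \<in> linfty. finite (accpts x) \<and> card (accpts x) \<in> A}"

definition lineable :: "(nat \<Rightarrow> real) set \<Rightarrow> bool" where
  "lineable Y \<longleftrightarrow> (\<exists>V. module.subspace lscale V \<and> V \<subseteq> Y \<union> {0} \<and>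
      \<not> (\<exists>B. finite B \<and> V \<subseteq> module.span lscale B))"

end

theory Submission
  imports Defs
begin

text \<open>Take \<open>K\<close> to be the squares. Between the blocks of two consecutive squares \<open>B\<^sup>2\<close> and
  \<open>(B+1)\<^sup>2\<close> lies the gap \<open>[n(B\<^sup>2+1), n((B+1)\<^sup>2))\<close>, of length at least \<open>2B\<close>, which
  meets no removed block \<open>[n\<^sub>k, n\<^sub>k\<^sub>+\<^sub>1)\<close>, \<open>k \<in> K\<close>.
  Split the indices of a sequence into consecutive blocks \<open>[b J, b (J+1))\<close> and let the basis
  vector \<open>e\<^sub>J\<close> ramp through \<open>1, 2, \<dots>, b (J+1) - b J\<close> on block \<open>J\<close> and vanish elsewhere;
  enumerating every value infinitely often makes the accumulation points of a combination
  \<open>\<Sum>\<^sub>j c\<^sub>j e\<^sub>j\<close> equal to its set of values. If \<open>J\<close> is the last index with \<open>c\<^sub>J \<noteq> 0\<close>, the number of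
  values lies between \<open>b (J+1) - b J + 1\<close> and \<open>b (J+1)\<close>. Choosing \<open>b (J+1) = n((b J+1)\<^sup>2) - 1\<close>
  puts this whole range into the gap after the square \<open>(b J)\<^sup>2\<close>.\<close>

lemma vector_space_lscale: "vector_space lscale"
  by unfold_locales (auto simp: lscale_def fun_eq_iff algebra_simps)

lemma sum_fun_apply: "(\<Sum>a\<in>A. f a) i = (\<Sum>a\<in>A. (f a :: nat \<Rightarrow> real) i)"
  by (induction A rule: infinite_finite_induct) auto

definition repeat_each :: "(nat \<Rightarrow> real) \<Rightarrow> nat \<Rightarrow> real" where
  "repeat_each g i = g (fst (prod_decode i))"

lemma accpts_repeat_each:
  assumes "finite (range g)"
  shows "accpts (repeat_each g) = range g"
proof
  show "accpts (repeat_each g) \<subseteq> range g"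
  proof
    fix a assume "a \<in> accpts (repeat_each g)"
    then obtain r where r: "(repeat_each g \<circ> r) \<longlonglongrightarrow> a"
      unfolding accpts_def by auto
    show "a \<in> range g"
      by (rule Lim_in_closed_set[OF finite_imp_closed[OF assms] _ _ r])
         (auto simp: repeat_each_def)
  qed
next
  show "range g \<subseteq> accpts (repeat_each g)"
  proof
    fix a assume "a \<in> range g"
    then obtain s where s: "a = g s" by auto
    have "strict_mono (\<lambda>t. prod_encode (s, t))"
      unfolding strict_mono_Suc_iff by (simp add: prod_encode_def)
    moreover have "repeat_each g \<circ> (\<lambda>t. prod_encode (s, t)) = (\<lambda>t. a)"
      using s by (auto simp: fun_eq_iff repeat_each_def)
    ultimately show "a \<in> accpts (repeat_each g)"
      unfolding accpts_def by (auto intro!: exI[of _ "\<lambda>t. prod_encode (s, t)"])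
  qed
qed

lemma bounded_range_repeat_each: "finite (range g) \<Longrightarrow> bounded (range (repeat_each g))"
  by (rule bounded_subset[OF finite_imp_bounded]) (auto simp: repeat_each_def)

definition block_index :: "(nat \<Rightarrow> nat) \<Rightarrow> nat \<Rightarrow> nat" where
  "block_index b s = (LEAST J. s < b (Suc J))"

definition ramp_seq :: "(nat \<Rightarrow> nat) \<Rightarrow> (nat \<Rightarrow> real) \<Rightarrow> nat \<Rightarrow> real" where
  "ramp_seq b c s =
     (if b 0 \<le> s then c (block_index b s) * real (s + 1 - b (block_index b s)) else 0)"

definition ramp_space :: "(nat \<Rightarrow> nat) \<Rightarrow> (nat \<Rightarrow> real) set" where
  "ramp_space b = {repeat_each (ramp_seq b c) | c. finite {j. c j \<noteq> 0}}"

lemma ramp_seq_add: "ramp_seq b (\<lambda>j. c j + d j) s = ramp_seq b c s + ramp_seq b d s"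
  by (simp add: ramp_seq_def algebra_simps)

lemma ramp_seq_scale: "ramp_seq b (\<lambda>j. a * c j) s = a * ramp_seq b c s"
  by (simp add: ramp_seq_def)

lemma subspace_ramp_space: "module.subspace lscale (ramp_space b)"
proof -
  interpret vector_space lscale by (rule vector_space_lscale)
  show ?thesis
    unfolding subspace_def
  proof (intro conjI ballI allI)
    show "0 \<in> ramp_space b"
      unfolding ramp_space_def
      by (rule CollectI, rule exI[of _ "\<lambda>_. 0"]) (auto simp: ramp_seq_def repeat_each_def fun_eq_iff)
  next
    fix x y assume "x \<in> ramp_space b" "y \<in> ramp_space b"
    then obtain c d where c: "finite {j. c j \<noteq> 0}" "x = repeat_each (ramp_seq b c)"
      and d: "finite {j. d j \<noteq> 0}" "y = repeat_each (ramp_seq b d)"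
      unfolding ramp_space_def by auto
    have "finite {j. c j + d j \<noteq> 0}"
      by (rule finite_subset[of _ "{j. c j \<noteq> 0} \<union> {j. d j \<noteq> 0}"]) (use c d in auto)
    moreover have "x + y = repeat_each (ramp_seq b (\<lambda>j. c j + d j))"
      using c d by (simp add: fun_eq_iff repeat_each_def ramp_seq_add)
    ultimately show "x + y \<in> ramp_space b"
      unfolding ramp_space_def by blast
  next
    fix a x assume "x \<in> ramp_space b"
    then obtain c where c: "finite {j. c j \<noteq> 0}" "x = repeat_each (ramp_seq b c)"
      unfolding ramp_space_def by auto
    have "finite {j. a * c j \<noteq> 0}"
      by (rule finite_subset[OF _ c(1)]) auto
    moreover have "lscale a x = repeat_each (ramp_seq b (\<lambda>j. a * c j))"
      using c by (simp add: fun_eq_iff repeat_each_def ramp_seq_scale lscale_def)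
    ultimately show "lscale a x \<in> ramp_space b"
      unfolding ramp_space_def by blast
  qed
qed

lemma biorthogonal_independent:
  assumes "\<And>j j'. e j' (p j) = (if j' = j then 1 else (0::real))"
  shows "module.independent lscale (range e)"
proof -
  interpret vector_space lscale by (rule vector_space_lscale)
  show ?thesis
  proof
    assume "dependent (range e)"
    then obtain t u where t: "finite t" "t \<subseteq> range e" "(\<Sum>v\<in>t. lscale (u v) v) = 0"
      and "\<exists>v\<in>t. u v \<noteq> 0"
      unfolding dependent_explicit by blast
    then obtain j where j: "e j \<in> t" "u (e j) \<noteq> 0" by blast
    have "(\<Sum>v\<in>t. u v * v (p j)) = (\<Sum>v\<in>t. lscale (u v) v) (p j)"
      by (simp add: sum_fun_apply lscale_def)
    also have "\<dots> = 0" using t(3) by simp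
    finally have "(\<Sum>v\<in>t. u v * v (p j)) = 0" .
    moreover have "(\<Sum>v\<in>t. u v * v (p j)) = (\<Sum>v\<in>t. if v = e j then u v else 0)"
    proof (rule sum.cong)
      fix v assume "v \<in> t"
      then obtain j' where j': "v = e j'" using t(2) by auto
      show "u v * v (p j) = (if v = e j then u v else 0)"
      proof (cases "j' = j")
        case False
        then have "e j' (p j) \<noteq> e j (p j)" using assms by simp
        then have "v \<noteq> e j" using j' by auto
        then show ?thesis using assms j' False by simp
      qed (use j' assms in simp)
    qed simp
    ultimately show False using j t(1) by (simp add: sum.delta')
  qed
qed

context
  fixes b :: "nat \<Rightarrow> nat"
  assumes b_mono: "strict_mono b" and b_pos: "0 < b 0"
begin

lemma block_start_mono: "b 0 \<le> b J"
  using b_mono by (simp add: strict_mono_less_eq)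

lemma block_start_pos: "0 < b J"
  using b_pos block_start_mono by (rule less_le_trans)

lemma block_index_eq:
  assumes "b J \<le> s" "s < b (Suc J)"
  shows "block_index b s = J"
  unfolding block_index_def
proof (rule Least_equality)
  fix J' assume J': "s < b (Suc J')"
  show "J \<le> J'"
  proof (rule ccontr)
    assume "\<not> J \<le> J'"
    then have "b (Suc J') \<le> b J" using b_mono by (simp add: strict_mono_less_eq)
    with assms J' show False by simp
  qed
qed fact

lemma obtain_block:
  assumes "b 0 \<le> s"
  obtains J where "b J \<le> s" "s < b (Suc J)"
proof -
  define J where "J = (LEAST J. s < b (Suc J))"
  have "s < b (Suc s)" using seq_suble[OF b_mono, of "Suc s"] by simp
  then have upper: "s < b (Suc J)" unfolding J_def by (rule LeastI)
  have "b J \<le> s"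
  proof (cases J)
    case (Suc J')
    then have "\<not> s < b (Suc J')" using not_less_Least[of J' "\<lambda>J. s < b (Suc J)"] J_def by auto
    then show ?thesis using Suc by simp
  qed (use assms in simp)
  from this upper show thesis by (rule that)
qed

lemma ramp_seq_block:
  assumes "b J \<le> s" "s < b (Suc J)"
  shows "ramp_seq b c s = c J * real (s + 1 - b J)"
proof -
  have "b 0 \<le> s" using block_start_mono assms(1) by (rule le_trans)
  then show ?thesis using block_index_eq[OF assms] by (simp add: ramp_seq_def)
qed

lemma ramp_seq_beyond_support:
  assumes "\<forall>j>J. c j = 0" "b (Suc J) \<le> s"
  shows "ramp_seq b c s = 0"
proof -
  have "b 0 \<le> s" using block_start_mono assms(2) by (rule le_trans)
  then obtain J' where J': "b J' \<le> s" "s < b (Suc J')" by (rule obtain_block)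
  have "J < J'"
  proof (rule ccontr)
    assume "\<not> J < J'"
    then have "b (Suc J') \<le> b (Suc J)" using b_mono by (simp add: strict_mono_less_eq)
    with J' assms(2) show False by simp
  qed
  then show ?thesis using ramp_seq_block[OF J'] assms(1) by simp
qed

lemma ramp_seq_0: "ramp_seq b c 0 = 0"
  using b_pos by (simp add: ramp_seq_def)

lemma range_ramp_seq:
  assumes "\<forall>j>J. c j = 0"
  shows "range (ramp_seq b c) = ramp_seq b c ` {..<b (Suc J)}"
proof (intro equalityI subsetI)
  fix y assume "y \<in> range (ramp_seq b c)"
  then obtain s where y: "y = ramp_seq b c s" by auto
  show "y \<in> ramp_seq b c ` {..<b (Suc J)}"
  proof (cases "s < b (Suc J)")
    case False
    then have "y = ramp_seq b c 0" using y ramp_seq_0 ramp_seq_beyond_support[OF assms] by simp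
    with block_start_pos[of "Suc J"] show ?thesis by blast
  qed (use y in auto)
qed auto

lemma inj_on_ramp_seq_block:
  assumes "c J \<noteq> 0"
  shows "inj_on (ramp_seq b c) (insert 0 {b J..<b (Suc J)})"
proof (rule inj_onI)
  let ?T = "insert 0 {b J..<b (Suc J)}"
  have value_on_block: "ramp_seq b c s = c J * real (s + 1 - b J)" and block_pos: "b J \<le> s"
    if "s \<in> ?T" "s \<noteq> 0" for s
    using that ramp_seq_block[of J s c] by auto
  have nonzero: "ramp_seq b c s \<noteq> 0" if "s \<in> ?T" "s \<noteq> 0" for s
  proof -
    have "0 < s + 1 - b J" using block_pos[OF that] by simp
    then show ?thesis using value_on_block[OF that] assms by simp
  qed
  fix x y assume x: "x \<in> ?T" and y: "y \<in> ?T" and eq: "ramp_seq b c x = ramp_seq b c y"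
  show "x = y"
  proof (cases "x = 0 \<or> y = 0")
    case True
    then show ?thesis
    proof
      assume "x = 0"
      then show ?thesis using eq ramp_seq_0 nonzero[OF y] by (cases "y = 0") simp_all
    next
      assume "y = 0"
      then show ?thesis using eq ramp_seq_0 nonzero[OF x] by (cases "x = 0") simp_all
    qed
  next
    case False
    then have "real (x + 1 - b J) = real (y + 1 - b J)"
      using eq value_on_block x y assms by simp
    moreover have "b J \<le> x" "b J \<le> y" using False block_pos x y by auto
    ultimately show ?thesis by simp
  qed
qed

lemma card_range_ramp_seq:
  assumes last: "c J \<noteq> 0" "\<forall>j>J. c j = 0"
  shows "finite (range (ramp_seq b c))"
    and "b (Suc J) - b J < card (range (ramp_seq b c))"
    and "card (range (ramp_seq b c)) \<le> b (Suc J)"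
proof -
  let ?g = "ramp_seq b c" and ?T = "insert 0 {b J..<b (Suc J)}"
  show fin: "finite (range ?g)"
    unfolding range_ramp_seq[OF last(2)] by simp
  show "card (range ?g) \<le> b (Suc J)"
    unfolding range_ramp_seq[OF last(2)] using card_image_le[of "{..<b (Suc J)}" ?g] by simp
  have "b (Suc J) - b J + 1 = card ?T" using block_start_pos[of J] by simp
  also have "\<dots> = card (?g ` ?T)" using inj_on_ramp_seq_block[of c J, OF last(1)] by (rule card_image[symmetric])
  also have "\<dots> \<le> card (range ?g)" by (rule card_mono[OF fin]) auto
  finally show "b (Suc J) - b J < card (range ?g)" by simp
qed

lemma ramp_space_subset_Lset:
  assumes "\<forall>J. {b (Suc J) - b J <.. b (Suc J)} \<subseteq> M"
  shows "ramp_space b \<subseteq> Lset M \<union> {0}"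
proof
  fix x assume "x \<in> ramp_space b"
  then obtain c where c: "finite {j. c j \<noteq> 0}" and x: "x = repeat_each (ramp_seq b c)"
    unfolding ramp_space_def by auto
  show "x \<in> Lset M \<union> {0}"
  proof (cases "{j. c j \<noteq> 0} = {}")
    case True
    then have "x = 0" by (auto simp: x fun_eq_iff repeat_each_def ramp_seq_def)
    then show ?thesis by simp
  next
    case False
    define J where "J = Max {j. c j \<noteq> 0}"
    have "c J \<noteq> 0" using Max_in[OF c False] by (simp add: J_def)
    moreover have "\<forall>j>J. c j = 0"
    proof (intro allI impI)
      fix j assume "J < j"
      then show "c j = 0" using Max_ge[OF c, of j] by (auto simp: J_def)
    qed
    ultimately have "finite (range (ramp_seq b c))"
      and card: "card (range (ramp_seq b c)) \<in> {b (Suc J) - b J <.. b (Suc J)}"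
      using card_range_ramp_seq[of c J] by auto
    note fin = this(1)
    have "accpts x = range (ramp_seq b c)" using accpts_repeat_each[OF fin] x by simp
    moreover have "card (range (ramp_seq b c)) \<in> M" by (rule subsetD[OF assms[rule_format] card])
    moreover have "bounded (range x)" using bounded_range_repeat_each[OF fin] x by simp
    ultimately show ?thesis using fin by (simp add: Lset_def linfty_def)
  qed
qed

lemma ramp_space_infinite_dimensional:
  "\<not> (\<exists>B. finite B \<and> ramp_space b \<subseteq> module.span lscale B)"
proof
  interpret vector_space lscale by (rule vector_space_lscale)
  define e where "e j = repeat_each (ramp_seq b (\<lambda>k. if k = j then 1 else 0))" for j
  have e_at_block_start: "e j' (prod_encode (b j, 0)) = (if j' = j then 1 else 0)" for j j'
    using ramp_seq_block[of j "b j"] b_mono by (simp add: e_def repeat_each_def strict_mono_Suc_iff)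
  have "inj e"
    by (rule injI) (metis e_at_block_start zero_neq_one)
  have "range e \<subseteq> ramp_space b"
    unfolding ramp_space_def e_def by (auto intro!: exI[of _ "\<lambda>k. if k = _ then 1 else 0"])
  moreover assume "\<exists>B. finite B \<and> ramp_space b \<subseteq> span B"
  ultimately have "finite (range e)"
    using independent_span_bound biorthogonal_independent[of e "\<lambda>j. prod_encode (b j, 0)", OF e_at_block_start] by blast
  with \<open>inj e\<close> show False using finite_imageD by blast
qed

lemma lineable_Lset_if_block_lengths:
  assumes "\<forall>J. {b (Suc J) - b J <.. b (Suc J)} \<subseteq> M"
  shows "lineable (Lset M)"
  unfolding lineable_def
  using subspace_ramp_space ramp_space_subset_Lset[OF assms] ramp_space_infinite_dimensional
  by blast

end

lemma strict_mono_on_add_le: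
  fixes n :: "nat \<Rightarrow> nat"
  assumes "strict_mono_on {1..} n" "1 \<le> a"
  shows "n a + d \<le> n (a + d)"
proof (induction d)
  case (Suc d)
  have "n (a + d) < n (a + Suc d)"
    using assms by (intro strict_mono_onD[OF assms(1)]) auto
  with Suc show ?case by simp
qed simp

lemma not_in_blocks_if_gap:
  fixes n :: "nat \<Rightarrow> nat"
  assumes n: "strict_mono_on {1..} n" and gap: "K \<inter> {a<..<a'} = {}" and "a < a'"
    and m: "n (Suc a) \<le> m" "m < n a'"
  shows "m \<notin> (\<Union>k\<in>K. {m. n k \<le> m \<and> m < n (Suc k)})"
proof
  assume "m \<in> (\<Union>k\<in>K. {m. n k \<le> m \<and> m < n (Suc k)})"
  then obtain k where k: "k \<in> K" "n k \<le> m" "m < n (Suc k)" by auto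
  show False
  proof (cases "k \<le> a")
    case True
    then have "n (Suc k) \<le> n (Suc a)" by (intro strict_mono_on_leD[OF n]) auto
    with k m show False by simp
  next
    case False
    then have "a' \<le> k" using gap k(1) by auto
    then have "n a' \<le> n k" using \<open>a < a'\<close> by (intro strict_mono_on_leD[OF n]) auto
    with k m show False by simp
  qed
qed

lemma no_square_between_consecutive_squares:
  "(\<lambda>i. i ^ 2) ` A \<inter> {B ^ 2 <..< (Suc B) ^ 2} = ({} :: nat set)"
proof -
  have "(Suc B) ^ 2 \<le> i ^ 2" if "B ^ 2 < i ^ 2" for i :: nat
    using power_less_imp_less_base[OF that] by (intro power_mono) auto
  then show ?thesis by fastforce
qed

fun square_gap_bound :: "(nat \<Rightarrow> nat) \<Rightarrow> nat \<Rightarrow> nat" where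
  "square_gap_bound n 0 = 1"
| "square_gap_bound n (Suc J) = n ((square_gap_bound n J + 1) ^ 2) - 1"

context
  fixes n :: "nat \<Rightarrow> nat"
  assumes n_mono: "strict_mono_on {1..} n" and n_pos: "\<forall>k\<ge>1. 0 < n k"
begin

lemma self_le_n: "1 \<le> k \<Longrightarrow> k \<le> n k"
  using strict_mono_on_add_le[OF n_mono, of 1 "k - 1"] n_pos by auto

lemma less_square_gap_step: "0 < B \<Longrightarrow> B < n ((B + 1) ^ 2) - 1"
  using self_le_n[of "(B + 1) ^ 2"] by (simp add: power2_eq_square)

lemma square_gap_bound_pos: "0 < square_gap_bound n J"
proof (induction J)
  case (Suc J)
  then show ?case using less_square_gap_step[OF Suc] by simp
qed simp

lemma strict_mono_square_gap_bound: "strict_mono (square_gap_bound n)"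
  unfolding strict_mono_Suc_iff using less_square_gap_step square_gap_bound_pos by simp

lemma square_gap_bound_interval:
  "{square_gap_bound n (Suc J) - square_gap_bound n J <.. square_gap_bound n (Suc J)}
     \<subseteq> {m. 2 \<le> m} - (\<Union>k\<in>(\<lambda>i. i ^ 2) ` {1..}. {m. n k \<le> m \<and> m < n (Suc k)})"
proof
  define B where "B = square_gap_bound n J"
  have "0 < B" by (simp add: B_def square_gap_bound_pos)
  fix m assume "m \<in> {square_gap_bound n (Suc J) - square_gap_bound n J <.. square_gap_bound n (Suc J)}"
  then have m: "n ((B + 1) ^ 2) - B \<le> m" "m < n ((B + 1) ^ 2)"
    using self_le_n[of "(B + 1) ^ 2"] by (auto simp: B_def)
  have "B ^ 2 + 1 + 2 * B = (B + 1) ^ 2" by (simp add: power2_eq_square)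
  then have "n (B ^ 2 + 1) + 2 * B \<le> n ((B + 1) ^ 2)"
    using strict_mono_on_add_le[OF n_mono, of "B ^ 2 + 1" "2 * B"] by simp
  then have lower: "n (Suc (B ^ 2)) \<le> m" using m by simp
  moreover have "2 \<le> m"
  proof -
    have "0 < B ^ 2" using \<open>0 < B\<close> by simp
    then show ?thesis using lower self_le_n[of "Suc (B ^ 2)"] by linarith
  qed
  moreover have "m \<notin> (\<Union>k\<in>(\<lambda>i. i ^ 2) ` {1..}. {m. n k \<le> m \<and> m < n (Suc k)})"
    using no_square_between_consecutive_squares lower m(2)
    by (intro not_in_blocks_if_gap[OF n_mono]) (auto simp: power2_eq_square)
  ultimately show "m \<in> {m. 2 \<le> m} - (\<Union>k\<in>(\<lambda>i. i ^ 2) ` {1..}. {m. n k \<le> m \<and> m < n (Suc k)})"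
    by simp
qed

end

theorem proposition2p6:
  fixes n :: "nat \<Rightarrow> nat"
  assumes "strict_mono_on {1..} n"
    and "\<forall>k\<ge>1. 0 < n k"
  shows "\<exists>K \<subseteq> {1..}. infinite K \<and>
    lineable (Lset ({m. 2 \<le> m} - (\<Union>k\<in>K. {m. n k \<le> m \<and> m < n (Suc k)})))"
proof (intro exI conjI)
  let ?K = "(\<lambda>i::nat. i ^ 2) ` {1..}"
  show "?K \<subseteq> {1..}" by auto
  have "inj_on (\<lambda>i::nat. i ^ 2) {1..}" by (rule inj_onI) (erule power_eq_imp_eq_base, auto)
  then show "infinite ?K" using finite_imageD infinite_Ici by blast
  show "lineable (Lset ({m. 2 \<le> m} - (\<Union>k\<in>?K. {m. n k \<le> m \<and> m < n (Suc k)})))"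
    using square_gap_bound_interval[OF assms]
    by (intro lineable_Lset_if_block_lengths[OF strict_mono_square_gap_bound[OF assms]])
       (auto simp: square_gap_bound_pos[OF assms])
qed

end
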